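(* The dual space $\mathcal R^*$ of Read's space $\mathcal R=(c_0,|||\cdot|||)$ is smooth, i.e. its (dual) norm is Gâteaux differentiable at every nonzero element.
   Context: Let $c_{00}(\mathbb Q)$ be the set of finitely supported sequences with rational coefficients, and let $(u_n)_{n\in\mathbb N}$ be a sequence in $c_{00}(\mathbb Q)$ which lists every element of $c_{00}(\mathbb Q)$ infinitely many times. Let $(a_n)_{n\in\mathbb N}$ be a strictly increasing sequence of positive integers with $a_n>\max\operatorname{supp} u_n$ and $a_n>\|u_n\|_1$ for every $n$. $(e_n)$ denotes the canonical unit vectors and $\langle x,y\rangle=\sum_n x_ny_n$. Read's norm on $c_0$ is $|||x||| = \|x\|_\infty + \sum_{n} 2^{-a_n^2}|\langle x, u_n - e_{a_n}\rangle|$, and Read's space is $\mathcal R=(c_0,|||\cdot|||)$ (real scalars). *)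

theory Defs
  imports Complex_Main
begin

definition c0 :: "(nat \<Rightarrow> real) set" where
  "c0 = {x. x \<longlonglongrightarrow> 0}"

definition c00Q :: "(nat \<Rightarrow> real) set" where
  "c00Q = {v. finite {k. v k \<noteq> 0} \<and> (\<forall>k. v k \<in> \<rat>)}"

definition supnorm :: "(nat \<Rightarrow> real) \<Rightarrow> real" where
  "supnorm x = (SUP k. \<bar>x k\<bar>)"

definition l1norm :: "(nat \<Rightarrow> real) \<Rightarrow> real" where
  "l1norm v = (\<Sum>k\<in>{k. v k \<noteq> 0}. \<bar>v k\<bar>)"

definition pair :: "(nat \<Rightarrow> real) \<Rightarrow> (nat \<Rightarrow> real) \<Rightarrow> real" where
  "pair x y = (\<Sum>k\<in>{k. y k \<noteq> 0}. x k * y k)"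

definition unitvec :: "nat \<Rightarrow> nat \<Rightarrow> real" where
  "unitvec n = (\<lambda>k. if k = n then 1 else 0)"

definition read_admissible :: "(nat \<Rightarrow> nat \<Rightarrow> real) \<Rightarrow> (nat \<Rightarrow> nat) \<Rightarrow> bool" where
  "read_admissible u a \<longleftrightarrow>
     (\<forall>n. u n \<in> c00Q) \<and>
     (\<forall>v\<in>c00Q. infinite {n. u n = v}) \<and>
     strict_mono a \<and> (\<forall>n. 0 < a n) \<and>
     (\<forall>n k. u n k \<noteq> 0 \<longrightarrow> k < a n) \<and>
     (\<forall>n. l1norm (u n) < real (a n))"

definition read_norm :: "(nat \<Rightarrow> nat \<Rightarrow> real) \<Rightarrow> (nat \<Rightarrow> nat) \<Rightarrow> (nat \<Rightarrow> real) \<Rightarrow> real" where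
  "read_norm u a x = supnorm x +
     (\<Sum>n. inverse (2 ^ (a n ^ 2)) * \<bar>pair x (\<lambda>k. u n k - unitvec (a n) k)\<bar>)"

text \<open>The dual space of (c0, read_norm): linear functionals on c0 bounded w.r.t. read_norm,
  represented extensionally (value 0 outside c0).\<close>
definition read_dual :: "(nat \<Rightarrow> nat \<Rightarrow> real) \<Rightarrow> (nat \<Rightarrow> nat) \<Rightarrow> ((nat \<Rightarrow> real) \<Rightarrow> real) set" where
  "read_dual u a = {f.
     (\<forall>x\<in>c0. \<forall>y\<in>c0. f (\<lambda>k. x k + y k) = f x + f y) \<and>
     (\<forall>c. \<forall>x\<in>c0. f (\<lambda>k. c * x k) = c * f x) \<and>
     (\<exists>C. \<forall>x\<in>c0. \<bar>f x\<bar> \<le> C * read_norm u a x) \<and>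
     (\<forall>x. x \<notin> c0 \<longrightarrow> f x = 0)}"

definition dual_norm :: "(nat \<Rightarrow> nat \<Rightarrow> real) \<Rightarrow> (nat \<Rightarrow> nat) \<Rightarrow> ((nat \<Rightarrow> real) \<Rightarrow> real) \<Rightarrow> real" where
  "dual_norm u a f = (SUP x\<in>{x\<in>c0. read_norm u a x \<le> 1}. \<bar>f x\<bar>)"

definition gateaux_diff ::
  "('b \<Rightarrow> real) set \<Rightarrow> (('b \<Rightarrow> real) \<Rightarrow> real) \<Rightarrow> ('b \<Rightarrow> real) \<Rightarrow> bool" where
  "gateaux_diff D N f \<longleftrightarrow>
     (\<exists>L. (\<forall>g\<in>D. ((\<lambda>t. (N (\<lambda>x. f x + t * g x) - N f) / t) \<longlongrightarrow> L g) (at 0)) \<and>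
          (\<forall>g\<in>D. \<forall>h\<in>D. L (\<lambda>x. g x + h x) = L g + L h) \<and>
          (\<forall>c. \<forall>g\<in>D. L (\<lambda>x. c * g x) = c * L g) \<and>
          (\<exists>C. \<forall>g\<in>D. \<bar>L g\<bar> \<le> C * N g))"

end

theory Submission
  imports Defs "HOL-Analysis.Analysis"
begin

text \<open>Read's norm is equivalent to the sup norm, so the dual of R is \<open>\<ell>\<^sup>1\<close> via the coefficients
  f(e_k) and the bidual is \<open>\<ell>\<^sup>\<infinity>\<close>, normed by the same formula. Every f attains its norm at
  some z in the bidual unit ball: a weak* cluster point of a maximising sequence, using weak*
  lower semicontinuity of the norm. This norming point is unique, because the extended norm is
  strictly convex: as every rational finitely supported vector recurs among the u_n, some term
  of the norm has opposite signs on any two non-proportional sequences. By Smulyan's argument,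
  uniqueness of the norming point makes the dual norm Gateaux differentiable at f, with
  derivative g \<mapsto> \<langle>g, z\<rangle>.\<close>

lemma succ_mult_four_pow_le: "(real m + 1) * 4 ^ m \<le> 4 * 2 ^ (m\<^sup>2)"
proof -
  have "real m + 1 \<le> 2 ^ m"
    using Suc_leI[OF less_exp[of m]] by (metis of_nat_Suc of_nat_le_iff of_nat_numeral of_nat_power add.commute)
  hence "(real m + 1) * 4 ^ m \<le> 2 ^ m * 4 ^ m" by simp
  also have "\<dots> = 2 ^ (3 * m)"
    by (simp add: power_mult power_mult_distrib[symmetric] numeral_3_eq_3 power_add)
  also have "\<dots> \<le> 2 ^ (m\<^sup>2 + 2)"
  proof (rule power_increasing)
    show "3 * m \<le> m\<^sup>2 + 2"
    proof (cases "m \<ge> 3")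
      case True
      hence "3 * m \<le> m * m" by simp
      thus ?thesis unfolding power2_eq_square by linarith
    next
      case False
      hence "m = 0 \<or> m = 1 \<or> m = 2" by auto
      thus ?thesis by auto
    qed
  qed simp
  finally show ?thesis by (simp add: power_add)
qed

lemma supnorm_le: "\<forall>k. \<bar>x k\<bar> \<le> B \<Longrightarrow> supnorm x \<le> B"
  unfolding supnorm_def by (rule cSUP_least) auto

lemma abs_le_supnorm:
  assumes "\<forall>k. \<bar>x k\<bar> \<le> B" shows "\<bar>x k\<bar> \<le> supnorm x"
  unfolding supnorm_def using assms by (intro cSUP_upper bdd_aboveI2) auto

lemma c0_bounded: "x \<in> c0 \<Longrightarrow> \<exists>B. \<forall>k. \<bar>x k\<bar> \<le> B"
  unfolding c0_def using convergent_imp_Bseq[of x] by (auto simp: convergent_def Bseq_def)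

lemma abs_add_bounded:
  fixes x y :: "nat \<Rightarrow> real"
  assumes "\<forall>k. \<bar>x k\<bar> \<le> B" "\<forall>k. \<bar>y k\<bar> \<le> C" shows "\<forall>k. \<bar>x k + y k\<bar> \<le> B + C"
proof
  fix k show "\<bar>x k + y k\<bar> \<le> B + C" using abs_triangle_ineq[of "x k" "y k"] assms[THEN spec, of k] by linarith
qed

lemma c0_if_eventually_zero: "(\<And>k. m \<le> k \<Longrightarrow> x k = 0) \<Longrightarrow> x \<in> c0"
  unfolding c0_def mem_Collect_eq
  by (rule tendsto_eventually) (auto simp: eventually_sequentially)

lemma c0_add: "x \<in> c0 \<Longrightarrow> y \<in> c0 \<Longrightarrow> (\<lambda>k. x k + y k) \<in> c0"
  unfolding c0_def using tendsto_add[of x 0 sequentially y 0] by simp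

lemma c0_scale: "x \<in> c0 \<Longrightarrow> (\<lambda>k. c * x k) \<in> c0"
  unfolding c0_def using tendsto_mult_right_zero[of x sequentially c] by simp

lemma unitvec_in_c0: "unitvec m \<in> c0"
  by (rule c0_if_eventually_zero[of "Suc m"]) (simp add: unitvec_def)

lemma pair_eq_sum: "finite S \<Longrightarrow> {k. y k \<noteq> 0} \<subseteq> S \<Longrightarrow> pair x y = (\<Sum>k\<in>S. x k * y k)"
  unfolding pair_def by (rule sum.mono_neutral_left) auto

definition truncate :: "nat \<Rightarrow> (nat \<Rightarrow> real) \<Rightarrow> nat \<Rightarrow> real" where
  "truncate m z = (\<lambda>k. if k < m then z k else 0)"

lemma truncate_in_c0: "truncate m z \<in> c0"
  by (rule c0_if_eventually_zero[of m]) (simp add: truncate_def)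

text \<open>Every f in the dual has summable coefficients f(e_k); pairing them with bounded sequences
  identifies the bidual with \<open>\<ell>\<^sup>\<infinity>\<close>, on which Read's norm is given by the same formula.\<close>

definition coef_pairing :: "((nat \<Rightarrow> real) \<Rightarrow> real) \<Rightarrow> (nat \<Rightarrow> real) \<Rightarrow> real" where
  "coef_pairing f z = (\<Sum>k. f (unitvec k) * z k)"

lemma bounded_seqs_coordinatewise_convergent_subseq:
  fixes x :: "nat \<Rightarrow> nat \<Rightarrow> real"
  assumes "\<And>j k. \<bar>x j k\<bar> \<le> B"
  obtains r z where "strict_mono r" "\<And>k. (\<lambda>j. x (r j) k) \<longlonglongrightarrow> z k"
proof -
  let ?S = "PiE UNIV (\<lambda>_::nat. {-B..B})"
  have "compact ?S"
    using compactin_PiE[of "\<lambda>_. euclidean" UNIV "\<lambda>_. {-B..B}"]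
    by (simp add: euclidean_product_topology)
  moreover have "x j k \<in> {-B..B}" for j k using assms[of j k] by (auto simp: abs_le_iff)
  hence "\<forall>j. x j \<in> ?S" by auto
  ultimately obtain r l where r: "strict_mono r" and lim: "(x \<circ> r) \<longlonglongrightarrow> l"
    using compact_imp_seq_compact unfolding seq_compact_def by metis
  have "isCont (\<lambda>y. y k) l" for k :: nat
    using continuous_on_eq_continuous_at[OF open_UNIV, of "\<lambda>y::nat\<Rightarrow>real. y k"]
      continuous_on_product_coordinates[of k] by simp
  hence "(\<lambda>j. x (r j) k) \<longlonglongrightarrow> l k" for k
    using isCont_tendsto_compose[OF _ lim, of "\<lambda>y. y k"] by (simp add: o_def)
  with r show thesis by (rule that)
qed

lemma exists_two_point_solution:
  fixes p q :: "nat \<Rightarrow> real"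
  assumes det: "p i * q j \<noteq> p j * q i"
  obtains vi vj where "p i * vi + p j * vj = T" "q i * vi + q j * vj = - T"
proof
  define D where "D = p i * q j - p j * q i"
  have D: "D \<noteq> 0" using det by (simp add: D_def)
  have "p i * (T * inverse D * (q j + p j)) + p j * (- T * inverse D * (p i + q i))
      = T * inverse D * (p i * (q j + p j) - p j * (p i + q i))" by (simp add: algebra_simps)
  also have "p i * (q j + p j) - p j * (p i + q i) = D" by (simp add: D_def algebra_simps)
  finally show "p i * (T * inverse D * (q j + p j)) + p j * (- T * inverse D * (p i + q i)) = T"
    using D by simp
  have "q i * (T * inverse D * (q j + p j)) + q j * (- T * inverse D * (p i + q i))
      = - T * inverse D * (q j * (p i + q i) - q i * (q j + p j))" by (simp add: algebra_simps)
  also have "q j * (p i + q i) - q i * (q j + p j) = D" by (simp add: D_def algebra_simps)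
  finally show "q i * (T * inverse D * (q j + p j)) + q j * (- T * inverse D * (p i + q i)) = - T"
    using D by simp
qed

text \<open>Solve exactly on the two coordinates i, j, then approximate by rationals.\<close>

lemma exists_c00Q_separating:
  fixes p q :: "nat \<Rightarrow> real"
  assumes p: "\<forall>k. \<bar>p k\<bar> \<le> B" and q: "\<forall>k. \<bar>q k\<bar> \<le> B" and det: "p i * q j \<noteq> p j * q i"
  obtains v where "v \<in> c00Q" "B < pair p v" "pair q v < - B"
proof -
  have B: "0 \<le> B" using p by (meson abs_ge_zero order_trans)
  define T where "T = B + 1"
  obtain vi vj where solve_p: "p i * vi + p j * vj = T" and solve_q: "q i * vi + q j * vj = - T"
    using exists_two_point_solution[OF det] .
  define \<delta> where "\<delta> = 1 / (4 * T)"
  have \<delta>: "0 < \<delta>" "B * \<delta> < 1/4" using B by (simp_all add: \<delta>_def T_def field_simps)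
  obtain ri where ri: "ri \<in> \<rat>" "\<bar>ri - vi\<bar> < \<delta>"
    using Rats_dense_in_real[of "vi - \<delta>" "vi + \<delta>"] \<delta> by (auto simp: abs_less_iff)
  obtain rj where rj: "rj \<in> \<rat>" "\<bar>rj - vj\<bar> < \<delta>"
    using Rats_dense_in_real[of "vj - \<delta>" "vj + \<delta>"] \<delta> by (auto simp: abs_less_iff)
  define v where "v = (\<lambda>k. if k = i then ri else if k = j then rj else 0)"
  have supp: "{k. v k \<noteq> 0} \<subseteq> {i, j}" by (auto simp: v_def)
  moreover have "\<forall>k. v k \<in> \<rat>" using ri rj by (simp add: v_def)
  ultimately have "v \<in> c00Q" unfolding c00Q_def using finite_subset by blast
  have "i \<noteq> j" using det by auto
  hence pair_v: "pair x v = x i * vi + x j * vj + (x i * (ri - vi) + x j * (rj - vj))" for x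
    using pair_eq_sum[OF _ supp] by (simp add: v_def algebra_simps)
  have err: "\<bar>x i * (ri - vi) + x j * (rj - vj)\<bar> < 1/2" if x: "\<forall>k. \<bar>x k\<bar> \<le> B" for x
  proof -
    have "\<bar>x i * (ri - vi)\<bar> \<le> B * \<delta>" "\<bar>x j * (rj - vj)\<bar> \<le> B * \<delta>"
      using x ri rj B by (auto simp: abs_mult intro!: mult_mono)
    thus ?thesis using \<delta> by linarith
  qed
  show thesis
  proof
    show "v \<in> c00Q" by fact
    show "B < pair p v" using pair_v[of p] solve_p err[OF p] unfolding T_def by linarith
    show "pair q v < - B" using pair_v[of q] solve_q err[OF q] unfolding T_def by linarith
  qed
qed

locale read_space =
  fixes u :: "nat \<Rightarrow> nat \<Rightarrow> real" and a :: "nat \<Rightarrow> nat"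
  assumes admissible: "read_admissible u a"
begin

abbreviation rnorm :: "(nat \<Rightarrow> real) \<Rightarrow> real" where "rnorm \<equiv> read_norm u a"

definition weight :: "nat \<Rightarrow> real" where "weight n = inverse (2 ^ (a n ^ 2))"

definition read_vec :: "nat \<Rightarrow> nat \<Rightarrow> real" where "read_vec n = (\<lambda>k. u n k - unitvec (a n) k)"

abbreviation read_term :: "nat \<Rightarrow> (nat \<Rightarrow> real) \<Rightarrow> real" where
  "read_term n x \<equiv> pair x (read_vec n)"

lemma read_norm_eq: "rnorm x = supnorm x + (\<Sum>n. weight n * \<bar>read_term n x\<bar>)"
  by (simp add: read_norm_def weight_def read_vec_def)

lemma support_u: "u n k \<noteq> 0 \<Longrightarrow> k < a n"
  using admissible unfolding read_admissible_def by auto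

lemma l1norm_u_less: "l1norm (u n) < real (a n)"
  using admissible unfolding read_admissible_def by auto

lemma infinite_occurrences: "v \<in> c00Q \<Longrightarrow> infinite {n. u n = v}"
  using admissible unfolding read_admissible_def by auto

lemma le_a: "n \<le> a n"
  using admissible seq_suble unfolding read_admissible_def by blast

lemma weight_pos: "0 < weight n"
  by (simp add: weight_def)

lemma weighted_read_term_nonneg: "0 \<le> weight n * \<bar>read_term n x\<bar>"
  using weight_pos[of n] by simp

lemma read_term_eq_sum: "read_term n x = (\<Sum>k\<le>a n. x k * read_vec n k)"
  by (rule pair_eq_sum) (auto simp: read_vec_def unitvec_def dest: support_u)

lemma read_term_eq_pair_u:
  assumes "u n = v" shows "read_term n x = pair x v - x (a n)"
proof -
  have "read_term n x = (\<Sum>k\<le>a n. x k * v k - x k * unitvec (a n) k)"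
    unfolding read_term_eq_sum by (simp add: read_vec_def assms algebra_simps)
  also have "\<dots> = (\<Sum>k\<le>a n. x k * v k) - (\<Sum>k\<le>a n. x k * unitvec (a n) k)"
    by (rule sum_subtractf)
  also have "(\<Sum>k\<le>a n. x k * unitvec (a n) k) = x (a n)"
    by (simp add: unitvec_def if_distrib cong: if_cong)
  also have "(\<Sum>k\<le>a n. x k * v k) = pair x v"
    by (rule pair_eq_sum[symmetric]) (use assms support_u in \<open>auto simp: less_imp_le\<close>)
  finally show ?thesis .
qed

lemma read_term_add: "read_term n (\<lambda>k. x k + y k) = read_term n x + read_term n y"
  by (simp add: read_term_eq_sum algebra_simps sum.distrib)

lemma read_term_scale: "read_term n (\<lambda>k. c * x k) = c * read_term n x"
  by (simp add: read_term_eq_sum sum_distrib_left mult.assoc)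

lemma sum_abs_read_vec_le: "(\<Sum>k\<le>a n. \<bar>read_vec n k\<bar>) \<le> real (a n) + 1"
proof -
  have "(\<Sum>k\<le>a n. \<bar>read_vec n k\<bar>) \<le> (\<Sum>k\<le>a n. \<bar>u n k\<bar>) + (\<Sum>k\<le>a n. \<bar>unitvec (a n) k\<bar>)"
    unfolding sum.distrib[symmetric] read_vec_def by (rule sum_mono) (rule abs_triangle_ineq4)
  also have "(\<Sum>k\<le>a n. \<bar>unitvec (a n) k\<bar>) = 1"
    by (simp add: unitvec_def if_distrib cong: if_cong)
  also have "(\<Sum>k\<le>a n. \<bar>u n k\<bar>) = l1norm (u n)"
    unfolding l1norm_def by (rule sum.mono_neutral_right) (auto dest: support_u)
  finally show ?thesis using l1norm_u_less[of n] by linarith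
qed

text \<open>The weights decay so fast that the functionals in Read's norm are uniformly small on
  bounded sequences; this is what makes Read's norm equivalent to the sup norm.\<close>

lemma weighted_read_term_le:
  assumes "\<forall>k. \<bar>x k\<bar> \<le> B" shows "weight n * \<bar>read_term n x\<bar> \<le> 4 * B * (1/4) ^ a n"
proof -
  have B: "0 \<le> B" using assms by (meson abs_ge_zero order_trans)
  have "\<bar>read_term n x\<bar> \<le> (\<Sum>k\<le>a n. B * \<bar>read_vec n k\<bar>)"
    unfolding read_term_eq_sum
    by (rule order_trans[OF sum_abs sum_mono]) (simp add: abs_mult assms mult_right_mono)
  also have "\<dots> \<le> B * (real (a n) + 1)"
    using sum_abs_read_vec_le[of n] B by (simp add: sum_distrib_left[symmetric] mult_left_mono)
  finally have "weight n * \<bar>read_term n x\<bar> \<le> weight n * (B * (real (a n) + 1))"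
    using weight_pos[of n] by (simp add: mult_left_mono)
  also have "\<dots> = B * (weight n * (real (a n) + 1))" by simp
  also have "weight n * (real (a n) + 1) \<le> 4 * (1/4) ^ a n"
    using succ_mult_four_pow_le[of "a n"] by (simp add: weight_def field_simps power_divide)
  finally show ?thesis using B by (simp add: mult_left_mono)
qed

lemma weighted_read_term_le_geometric:
  assumes "\<forall>k. \<bar>x k\<bar> \<le> B" shows "weight n * \<bar>read_term n x\<bar> \<le> 4 * B * (1/2) ^ n"
proof -
  have B: "0 \<le> B" using assms by (meson abs_ge_zero order_trans)
  have "(1/4::real) ^ a n \<le> (1/2) ^ n"
    by (rule order_trans[OF power_decreasing[OF le_a] power_mono]) simp_all
  hence "4 * B * (1/4) ^ a n \<le> 4 * B * (1/2) ^ n" using B by (simp add: mult_left_mono)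
  thus ?thesis using weighted_read_term_le[OF assms, of n] by linarith
qed

lemma summable_weighted_read_term:
  assumes "\<forall>k. \<bar>x k\<bar> \<le> B" shows "summable (\<lambda>n. weight n * \<bar>read_term n x\<bar>)"
  by (rule summable_comparison_test[where g = "\<lambda>n. 4 * B * (1/2) ^ n"])
    (use weighted_read_term_le_geometric[OF assms] weight_pos in \<open>auto simp: abs_mult less_imp_le\<close>)

lemma read_norm_le:
  assumes "\<forall>k. \<bar>x k\<bar> \<le> B" shows "rnorm x \<le> 9 * B"
proof -
  have "(\<Sum>n. weight n * \<bar>read_term n x\<bar>) \<le> (\<Sum>n. 4 * B * (1/2) ^ n)"
    by (rule suminf_le[OF weighted_read_term_le_geometric[OF assms] summable_weighted_read_term[OF assms]])
      simp
  also have "\<dots> = 8 * B" using suminf_geometric[of "1/2::real"] suminf_mult[of "\<lambda>n. (1/2::real) ^ n" "4 * B"]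
    by (simp add: summable_geometric)
  finally show ?thesis using supnorm_le[OF assms] unfolding read_norm_eq by linarith
qed

lemma supnorm_le_read_norm:
  assumes "\<forall>k. \<bar>x k\<bar> \<le> B" shows "supnorm x \<le> rnorm x"
  unfolding read_norm_eq
  using suminf_nonneg[OF summable_weighted_read_term[OF assms] weighted_read_term_nonneg] by simp

lemma abs_le_read_norm:
  assumes "\<forall>k. \<bar>x k\<bar> \<le> B" shows "\<bar>x k\<bar> \<le> rnorm x"
  using order_trans[OF abs_le_supnorm[OF assms] supnorm_le_read_norm[OF assms]] .

lemma read_norm_nonneg:
  assumes "\<forall>k. \<bar>x k\<bar> \<le> B" shows "0 \<le> rnorm x"
  using abs_le_read_norm[OF assms, of 0] by linarith

lemma read_norm_scale_le:
  assumes "\<forall>k. \<bar>x k\<bar> \<le> B" shows "rnorm (\<lambda>k. c * x k) \<le> \<bar>c\<bar> * rnorm x"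
proof -
  have "supnorm (\<lambda>k. c * x k) \<le> \<bar>c\<bar> * supnorm x"
    by (rule supnorm_le) (simp add: abs_mult abs_le_supnorm[OF assms] mult_left_mono)
  moreover have "(\<Sum>n. weight n * \<bar>read_term n (\<lambda>k. c * x k)\<bar>) = \<bar>c\<bar> * (\<Sum>n. weight n * \<bar>read_term n x\<bar>)"
    unfolding read_term_scale
    using suminf_mult[OF summable_weighted_read_term[OF assms], of "\<bar>c\<bar>"]
    by (simp add: abs_mult mult.left_commute)
  ultimately show ?thesis unfolding read_norm_eq by (simp add: algebra_simps)
qed

lemma read_norm_truncation_le:
  assumes z: "\<forall>k. \<bar>z k\<bar> \<le> B"
  shows "rnorm (truncate M z) \<le> rnorm z + 8 * B * (1/2) ^ M"
proof -
  define y where "y = truncate M z"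
  have B: "0 \<le> B" using z by (meson abs_ge_zero order_trans)
  have y: "\<forall>k. \<bar>y k\<bar> \<le> B" using z B by (simp add: y_def truncate_def)
  have "supnorm y \<le> supnorm z"
    by (rule supnorm_le) (auto simp: y_def truncate_def intro: abs_le_supnorm[OF z] order_trans[OF _ abs_le_supnorm[OF z]])
  have term_le: "weight n * \<bar>read_term n y\<bar> \<le> weight n * \<bar>read_term n z\<bar> + 4 * B * (1/2) ^ M * (1/2) ^ n" for n
  proof (cases "a n < M")
    case True
    hence "read_term n y = read_term n z"
      unfolding read_term_eq_sum by (intro sum.cong) (auto simp: y_def truncate_def)
    thus ?thesis using B by simp
  next
    case False
    have "(1/4::real) ^ a n = (1/2) ^ a n * (1/2) ^ a n" by (simp add: power_mult_distrib[symmetric])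
    also have "\<dots> \<le> (1/2) ^ M * (1/2) ^ n"
      using False le_a[of n] by (intro mult_mono power_decreasing) auto
    finally have "4 * B * (1/4) ^ a n \<le> 4 * B * (1/2) ^ M * (1/2) ^ n"
      using B by (simp add: mult_left_mono)
    thus ?thesis using weighted_read_term_le[OF y, of n] weighted_read_term_nonneg[of n z] by linarith
  qed
  have geom: "summable (\<lambda>n. 4 * B * (1/2::real) ^ M * (1/2) ^ n)"
    by (intro summable_mult summable_geometric) simp
  have "(\<Sum>n. weight n * \<bar>read_term n y\<bar>)
      \<le> (\<Sum>n. weight n * \<bar>read_term n z\<bar>) + (\<Sum>n. 4 * B * (1/2) ^ M * (1/2::real) ^ n)"
    using suminf_le[OF term_le summable_weighted_read_term[OF y] summable_add[OF summable_weighted_read_term[OF z] geom]]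
      suminf_add[OF summable_weighted_read_term[OF z] geom] by simp
  also have "(\<Sum>n. 4 * B * (1/2) ^ M * (1/2::real) ^ n) = 8 * B * (1/2) ^ M"
    using suminf_mult[of "\<lambda>n. (1/2::real) ^ n" "4 * B * (1/2) ^ M"] suminf_geometric[of "1/2::real"]
    by (simp add: summable_geometric)
  finally show ?thesis using \<open>supnorm y \<le> supnorm z\<close> unfolding read_norm_eq y_def by simp
qed

abbreviation Dual :: "((nat \<Rightarrow> real) \<Rightarrow> real) set" where "Dual \<equiv> read_dual u a"

abbreviation dnorm :: "((nat \<Rightarrow> real) \<Rightarrow> real) \<Rightarrow> real" where "dnorm \<equiv> dual_norm u a"

lemma read_dual_add: "f \<in> Dual \<Longrightarrow> x \<in> c0 \<Longrightarrow> y \<in> c0 \<Longrightarrow> f (\<lambda>k. x k + y k) = f x + f y"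
  unfolding read_dual_def by blast

lemma read_dual_scale: "f \<in> Dual \<Longrightarrow> x \<in> c0 \<Longrightarrow> f (\<lambda>k. c * x k) = c * f x"
  unfolding read_dual_def by blast

lemma read_dual_outside: "f \<in> Dual \<Longrightarrow> x \<notin> c0 \<Longrightarrow> f x = 0"
  unfolding read_dual_def by blast

lemma read_dual_zero: "f \<in> Dual \<Longrightarrow> f (\<lambda>k. 0) = 0"
  using read_dual_scale[of f "\<lambda>k. 0" 0] c0_if_eventually_zero[of 0 "\<lambda>k. 0"] by simp

lemma read_dual_bounded:
  assumes "f \<in> Dual" obtains C where "0 \<le> C" "\<forall>x\<in>c0. \<bar>f x\<bar> \<le> C * rnorm x"
proof -
  obtain C where C: "\<forall>x\<in>c0. \<bar>f x\<bar> \<le> C * rnorm x" using assms unfolding read_dual_def by blast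
  have "\<bar>f x\<bar> \<le> max C 0 * rnorm x" if x: "x \<in> c0" for x
  proof -
    have "0 \<le> rnorm x" using c0_bounded[OF x] read_norm_nonneg by blast
    hence "C * rnorm x \<le> max C 0 * rnorm x" by (simp add: mult_right_mono)
    thus ?thesis using C x by force
  qed
  thus thesis by (intro that[of "max C 0"]) auto
qed

lemma read_dual_lincomb:
  assumes f: "f \<in> Dual" and g: "g \<in> Dual" shows "(\<lambda>x. f x + t * g x) \<in> Dual"
proof -
  obtain C1 where C1: "0 \<le> C1" "\<forall>x\<in>c0. \<bar>f x\<bar> \<le> C1 * rnorm x" using read_dual_bounded[OF f] .
  obtain C2 where C2: "0 \<le> C2" "\<forall>x\<in>c0. \<bar>g x\<bar> \<le> C2 * rnorm x" using read_dual_bounded[OF g] .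
  have bound: "\<bar>f x + t * g x\<bar> \<le> (C1 + \<bar>t\<bar> * C2) * rnorm x" if x: "x \<in> c0" for x
  proof -
    have "\<bar>f x + t * g x\<bar> \<le> \<bar>f x\<bar> + \<bar>t\<bar> * \<bar>g x\<bar>" by (simp add: abs_mult[symmetric] abs_triangle_ineq)
    also have "\<dots> \<le> C1 * rnorm x + \<bar>t\<bar> * (C2 * rnorm x)"
      using C1 C2 x by (intro add_mono mult_left_mono) auto
    finally show ?thesis by (simp add: algebra_simps)
  qed
  show ?thesis
    using bound read_dual_add[OF f] read_dual_add[OF g] read_dual_scale[OF f] read_dual_scale[OF g]
      read_dual_outside[OF f] read_dual_outside[OF g]
    unfolding read_dual_def by (auto simp: algebra_simps intro!: exI[of _ "C1 + \<bar>t\<bar> * C2"])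
qed

lemma read_dual_finite_sum:
  assumes f: "f \<in> Dual" shows "\<forall>k\<ge>m. x k = 0 \<Longrightarrow> f x = (\<Sum>k<m. f (unitvec k) * x k)"
proof (induction m arbitrary: x)
  case 0
  hence "x = (\<lambda>k. 0)" by auto
  thus ?case using read_dual_zero[OF f] by simp
next
  case (Suc m)
  define y where "y = truncate m x"
  have y: "\<forall>k\<ge>m. y k = 0" by (simp add: y_def truncate_def)
  have "x = (\<lambda>k. y k + x m * unitvec m k)"
    using Suc.prems by (auto simp: y_def truncate_def unitvec_def not_less le_Suc_eq)
  hence "f x = f y + x m * f (unitvec m)"
    using read_dual_add[OF f c0_if_eventually_zero c0_scale[OF unitvec_in_c0]] y
      read_dual_scale[OF f unitvec_in_c0] by metis
  also have "f y = (\<Sum>k<m. f (unitvec k) * x k)" using Suc.IH[OF y] by (simp add: y_def truncate_def)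
  finally show ?case by (simp add: mult.commute)
qed

lemma read_dual_scale_functional: "g \<in> Dual \<Longrightarrow> (\<lambda>x. c * g x) \<in> Dual"
proof -
  have "(\<lambda>x. 0) \<in> Dual" unfolding read_dual_def by (auto intro: exI[of _ 0])
  thus "g \<in> Dual \<Longrightarrow> (\<lambda>x. c * g x) \<in> Dual" using read_dual_lincomb[of "\<lambda>x. 0" g c] by simp
qed

definition unit_ball :: "(nat \<Rightarrow> real) set" where "unit_ball = {x \<in> c0. rnorm x \<le> 1}"

lemma dual_norm_eq: "dnorm f = (SUP x\<in>unit_ball. \<bar>f x\<bar>)"
  unfolding dual_norm_def unit_ball_def ..

lemma zero_in_unit_ball: "(\<lambda>k. 0) \<in> unit_ball"
  using read_norm_le[of "\<lambda>k. 0" 0] c0_if_eventually_zero[of 0 "\<lambda>k. 0"] by (simp add: unit_ball_def)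

lemma bdd_above_unit_ball:
  assumes f: "f \<in> Dual" shows "bdd_above ((\<lambda>x. \<bar>f x\<bar>) ` unit_ball)"
proof -
  obtain C where C: "0 \<le> C" "\<forall>x\<in>c0. \<bar>f x\<bar> \<le> C * rnorm x" using read_dual_bounded[OF f] .
  have "\<bar>f x\<bar> \<le> C" if "x \<in> unit_ball" for x
    using that C mult_left_le[of "rnorm x" C] order_trans unfolding unit_ball_def by fastforce
  thus ?thesis by (rule bdd_aboveI2)
qed

lemma abs_le_dual_norm: "f \<in> Dual \<Longrightarrow> x \<in> c0 \<Longrightarrow> rnorm x \<le> 1 \<Longrightarrow> \<bar>f x\<bar> \<le> dnorm f"
  unfolding dual_norm_eq by (rule cSUP_upper[OF _ bdd_above_unit_ball]) (auto simp: unit_ball_def)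

lemma dual_norm_nonneg: "f \<in> Dual \<Longrightarrow> 0 \<le> dnorm f"
  using abs_le_dual_norm[of f "\<lambda>k. 0"] zero_in_unit_ball unfolding unit_ball_def by fastforce

lemma abs_le_dual_norm_mult:
  assumes f: "f \<in> Dual" and x: "x \<in> c0" shows "\<bar>f x\<bar> \<le> dnorm f * rnorm x"
proof -
  obtain B where B: "\<forall>k. \<bar>x k\<bar> \<le> B" using c0_bounded[OF x] by blast
  show ?thesis
  proof (cases "rnorm x = 0")
    case True
    hence "x = (\<lambda>k. 0)" using abs_le_read_norm[OF B] by force
    thus ?thesis using read_dual_zero[OF f] dual_norm_nonneg[OF f] read_norm_nonneg[of "\<lambda>k. 0" 0] by simp
  next
    case False
    hence r: "0 < rnorm x" using read_norm_nonneg[OF B] by simp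
    have "rnorm (\<lambda>k. inverse (rnorm x) * x k) \<le> \<bar>inverse (rnorm x)\<bar> * rnorm x"
      by (rule read_norm_scale_le[OF B])
    hence "\<bar>f (\<lambda>k. inverse (rnorm x) * x k)\<bar> \<le> dnorm f"
      using r by (intro abs_le_dual_norm[OF f c0_scale[OF x]]) simp
    hence "inverse (rnorm x) * \<bar>f x\<bar> \<le> dnorm f"
      using r by (simp add: read_dual_scale[OF f x] abs_mult del: inverse_eq_divide)
    thus ?thesis using r by (simp add: field_simps)
  qed
qed

lemma dual_norm_approx:
  assumes f: "f \<in> Dual" and e: "0 < e" obtains x where "x \<in> c0" "rnorm x \<le> 1" "dnorm f - e < f x"
proof -
  obtain x where x: "x \<in> unit_ball" and lt: "dnorm f - e < \<bar>f x\<bar>"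
    using less_cSUP_iff[OF _ bdd_above_unit_ball[OF f], of "dnorm f - e"] zero_in_unit_ball e
    unfolding dual_norm_eq by auto
  hence xc0: "x \<in> c0" and rx: "rnorm x \<le> 1" by (auto simp: unit_ball_def)
  obtain B where B: "\<forall>k. \<bar>x k\<bar> \<le> B" using c0_bounded[OF xc0] by blast
  have "rnorm (\<lambda>k. (-1) * x k) \<le> 1" using read_norm_scale_le[OF B, of "-1"] rx by simp
  moreover have "f (\<lambda>k. (-1) * x k) = - f x" using read_dual_scale[OF f xc0, of "-1"] by simp
  ultimately show thesis
    using that[OF xc0 rx] that[OF c0_scale[OF xc0], of "-1"] lt by (cases "0 \<le> f x") auto
qed

lemma dual_norm_pos: "f \<in> Dual \<Longrightarrow> f \<noteq> (\<lambda>_. 0) \<Longrightarrow> 0 < dnorm f"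
  using abs_le_dual_norm_mult read_dual_outside dual_norm_nonneg
  by (metis abs_ge_zero abs_le_zero_iff le_less mult_zero_left)

lemma read_dual_truncate: "f \<in> Dual \<Longrightarrow> f (truncate m z) = (\<Sum>k<m. f (unitvec k) * z k)"
  by (subst read_dual_finite_sum[of f m]) (auto simp: truncate_def)

lemma summable_abs_coef:
  assumes f: "f \<in> Dual" shows "summable (\<lambda>k. \<bar>f (unitvec k)\<bar>)"
proof (rule bounded_imp_summable)
  fix n
  define x where "x = truncate (Suc n) (\<lambda>k. sgn (f (unitvec k)))"
  have x: "\<forall>k. \<bar>x k\<bar> \<le> 1" by (simp add: x_def truncate_def abs_sgn_eq)
  have "(\<Sum>k\<le>n. \<bar>f (unitvec k)\<bar>) = f x"
    unfolding x_def read_dual_truncate[OF f] lessThan_Suc_atMost by (intro sum.cong) (auto simp: sgn_real_def)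
  also have "\<dots> \<le> dnorm f * rnorm x"
    using abs_le_dual_norm_mult[OF f, of x] truncate_in_c0 unfolding x_def by fastforce
  also have "\<dots> \<le> dnorm f * 9" using read_norm_le[OF x] dual_norm_nonneg[OF f] by (simp add: mult_left_mono)
  finally show "(\<Sum>k\<le>n. \<bar>f (unitvec k)\<bar>) \<le> dnorm f * 9" .
qed simp

lemma summable_coef_pairing:
  assumes f: "f \<in> Dual" and z: "\<forall>k. \<bar>z k\<bar> \<le> B" shows "summable (\<lambda>k. f (unitvec k) * z k)"
  by (rule summable_comparison_test[OF _ summable_mult[OF summable_abs_coef[OF f], of B]])
    (use z in \<open>auto simp: abs_mult mult.commute[of "\<bar>f _\<bar>"] intro!: exI[of _ 0] mult_right_mono\<close>)

lemma truncate_tendsto_coef_pairing: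
  assumes f: "f \<in> Dual" and z: "\<forall>k. \<bar>z k\<bar> \<le> B"
  shows "(\<lambda>m. f (truncate m z)) \<longlonglongrightarrow> coef_pairing f z"
  unfolding read_dual_truncate[OF f] coef_pairing_def by (rule summable_LIMSEQ[OF summable_coef_pairing[OF f z]])

lemma coef_pairing_eq:
  assumes f: "f \<in> Dual" and x: "x \<in> c0" shows "coef_pairing f x = f x"
proof -
  obtain B where B: "\<forall>k. \<bar>x k\<bar> \<le> B" using c0_bounded[OF x] by blast
  have "(\<lambda>m. f (truncate m x)) \<longlonglongrightarrow> f x"
  proof (rule LIMSEQ_I)
    fix r :: real assume r: "0 < r"
    define e where "e = r / (9 * dnorm f + 1)"
    have den: "0 < 9 * dnorm f + 1" using dual_norm_nonneg[OF f] by simp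
    hence e: "0 < e" using r by (simp add: e_def)
    obtain M where M: "\<forall>k\<ge>M. \<bar>x k\<bar> < e" using LIMSEQ_D[of x 0 e] x e unfolding c0_def by auto
    have "norm (f (truncate n x) - f x) < r" if n: "M \<le> n" for n
    proof -
      define y where "y = (\<lambda>k. x k + (-1) * truncate n x k)"
      have yc0: "y \<in> c0" unfolding y_def by (rule c0_add[OF x c0_scale[OF truncate_in_c0]])
      have y: "\<forall>k. \<bar>y k\<bar> \<le> e" using M n by (auto simp: y_def truncate_def less_imp_le)
      have "(\<lambda>k. truncate n x k + y k) = x" by (simp add: y_def)
      hence "f x = f (truncate n x) + f y" using read_dual_add[OF f truncate_in_c0[of n x] yc0] by simp
      moreover have "\<bar>f y\<bar> \<le> dnorm f * (9 * e)"
        using abs_le_dual_norm_mult[OF f yc0] read_norm_le[OF y] dual_norm_nonneg[OF f]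
        by (meson mult_left_mono order_trans)
      moreover have "dnorm f * (9 * e) < r" using e den r by (simp add: e_def field_simps)
      ultimately show ?thesis by simp
    qed
    thus "\<exists>M. \<forall>n\<ge>M. norm (f (truncate n x) - f x) < r" by blast
  qed
  thus ?thesis using truncate_tendsto_coef_pairing[OF f B] LIMSEQ_unique by blast
qed

lemma abs_coef_pairing_le:
  assumes f: "f \<in> Dual" and z: "\<forall>k. \<bar>z k\<bar> \<le> B" shows "\<bar>coef_pairing f z\<bar> \<le> dnorm f * rnorm z"
proof (rule LIMSEQ_le)
  show "(\<lambda>M. \<bar>f (truncate M z)\<bar>) \<longlonglongrightarrow> \<bar>coef_pairing f z\<bar>"
    by (rule tendsto_rabs[OF truncate_tendsto_coef_pairing[OF f z]])
  show "(\<lambda>M. dnorm f * (rnorm z + 8 * B * (1/2) ^ M)) \<longlonglongrightarrow> dnorm f * rnorm z"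
    by (auto intro!: tendsto_eq_intros LIMSEQ_power_zero)
  show "\<exists>N. \<forall>M\<ge>N. \<bar>f (truncate M z)\<bar> \<le> dnorm f * (rnorm z + 8 * B * (1/2) ^ M)"
    using abs_le_dual_norm_mult[OF f truncate_in_c0] read_norm_truncation_le[OF z] dual_norm_nonneg[OF f]
    by (meson mult_left_mono order_trans)
qed

lemma coef_pairing_lincomb:
  assumes f: "f \<in> Dual" and g: "g \<in> Dual" and z: "\<forall>k. \<bar>z k\<bar> \<le> B"
  shows "coef_pairing (\<lambda>x. f x + t * g x) z = coef_pairing f z + t * coef_pairing g z"
  using suminf_add[OF summable_coef_pairing[OF f z] summable_mult[OF summable_coef_pairing[OF g z], of t]]
    suminf_mult[OF summable_coef_pairing[OF g z], of t]
  unfolding coef_pairing_def by (simp add: algebra_simps)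

lemma coef_pairing_scale_functional:
  assumes g: "g \<in> Dual" and z: "\<forall>k. \<bar>z k\<bar> \<le> B"
  shows "coef_pairing (\<lambda>x. c * g x) z = c * coef_pairing g z"
  using suminf_mult[OF summable_coef_pairing[OF g z], of c] unfolding coef_pairing_def by (simp add: algebra_simps)

lemma coef_pairing_add:
  assumes f: "f \<in> Dual" and y: "\<forall>k. \<bar>y k\<bar> \<le> B" and z: "\<forall>k. \<bar>z k\<bar> \<le> B'"
  shows "coef_pairing f (\<lambda>k. y k + z k) = coef_pairing f y + coef_pairing f z"
  using suminf_add[OF summable_coef_pairing[OF f y] summable_coef_pairing[OF f z]]
  unfolding coef_pairing_def by (simp add: algebra_simps)

lemma coef_pairing_scale:
  assumes f: "f \<in> Dual" and z: "\<forall>k. \<bar>z k\<bar> \<le> B"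
  shows "coef_pairing f (\<lambda>k. c * z k) = c * coef_pairing f z"
  using suminf_mult[OF summable_coef_pairing[OF f z], of c] unfolding coef_pairing_def by (simp add: algebra_simps)

lemma coef_pairing_tendsto:
  assumes f: "f \<in> Dual" and x: "\<forall>j k. \<bar>x j k\<bar> \<le> B" and lim: "\<forall>k. (\<lambda>j. x j k) \<longlonglongrightarrow> z k"
  shows "(\<lambda>j. coef_pairing f (x j)) \<longlonglongrightarrow> coef_pairing f z"
proof -
  have "((\<lambda>j. \<Sum>k. f (unitvec k) * x j k) \<longlongrightarrow> (\<Sum>k. f (unitvec k) * z k)) sequentially"
  proof (rule conjunct2[OF conjunct2[OF tannerys_theorem[where M = "\<lambda>k. B * \<bar>f (unitvec k)\<bar>"]]])
    show "\<And>k. ((\<lambda>j. f (unitvec k) * x j k) \<longlongrightarrow> f (unitvec k) * z k) sequentially"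
      using lim by (intro tendsto_intros) auto
    show "\<forall>\<^sub>F (k, j) in at_top \<times>\<^sub>F sequentially. norm (f (unitvec k) * x j k) \<le> B * \<bar>f (unitvec k)\<bar>"
      using x by (intro always_eventually) (auto simp: abs_mult mult.commute[of "\<bar>f _\<bar>"] intro: mult_right_mono)
    show "summable (\<lambda>k. B * \<bar>f (unitvec k)\<bar>)" by (rule summable_mult[OF summable_abs_coef[OF f]])
  qed simp
  thus ?thesis unfolding coef_pairing_def .
qed

lemma read_term_tendsto:
  "\<forall>k. (\<lambda>j. x j k) \<longlonglongrightarrow> z k \<Longrightarrow> (\<lambda>j. read_term n (x j)) \<longlonglongrightarrow> read_term n z"
  unfolding read_term_eq_sum by (intro tendsto_intros) auto

lemma read_norm_lower_semicontinuous:
  assumes x: "\<forall>j k. \<bar>x j k\<bar> \<le> B" and r: "\<forall>j. rnorm (x j) \<le> r"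
    and lim: "\<forall>k. (\<lambda>j. x j k) \<longlonglongrightarrow> z k"
  shows "\<forall>k. \<bar>z k\<bar> \<le> B" and "rnorm z \<le> r"
proof -
  show z: "\<forall>k. \<bar>z k\<bar> \<le> B"
    using lim x by (auto intro: LIMSEQ_le_const2[OF tendsto_rabs])
  have partial: "\<bar>z k\<bar> + (\<Sum>n<N. weight n * \<bar>read_term n z\<bar>) \<le> r" for k N
  proof (rule LIMSEQ_le_const2)
    show "(\<lambda>j. \<bar>x j k\<bar> + (\<Sum>n<N. weight n * \<bar>read_term n (x j)\<bar>))
        \<longlonglongrightarrow> \<bar>z k\<bar> + (\<Sum>n<N. weight n * \<bar>read_term n z\<bar>)"
      using lim read_term_tendsto[OF lim] by (intro tendsto_intros) auto
    have "\<bar>x j k\<bar> + (\<Sum>n<N. weight n * \<bar>read_term n (x j)\<bar>) \<le> rnorm (x j)" for j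
    proof -
      have xj: "\<forall>k. \<bar>x j k\<bar> \<le> B" using x by blast
      have "(\<Sum>n<N. weight n * \<bar>read_term n (x j)\<bar>) \<le> (\<Sum>n. weight n * \<bar>read_term n (x j)\<bar>)"
        by (intro sum_le_suminf[OF summable_weighted_read_term[OF xj]] weighted_read_term_nonneg) simp
      thus ?thesis using abs_le_supnorm[OF xj, of k] unfolding read_norm_eq by linarith
    qed
    thus "\<exists>N'. \<forall>j\<ge>N'. \<bar>x j k\<bar> + (\<Sum>n<N. weight n * \<bar>read_term n (x j)\<bar>) \<le> r"
      using r by (meson order_trans)
  qed
  have "supnorm z \<le> r - (\<Sum>n<N. weight n * \<bar>read_term n z\<bar>)" for N
    using partial by (intro supnorm_le) (auto simp: algebra_simps)
  hence "(\<Sum>n. weight n * \<bar>read_term n z\<bar>) \<le> r - supnorm z"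
    by (intro suminf_le_const[OF summable_weighted_read_term[OF z]]) (auto simp: algebra_simps)
  thus "rnorm z \<le> r" unfolding read_norm_eq by simp
qed

definition norming_point :: "((nat \<Rightarrow> real) \<Rightarrow> real) \<Rightarrow> (nat \<Rightarrow> real) \<Rightarrow> bool" where
  "norming_point f z \<longleftrightarrow> (\<forall>k. \<bar>z k\<bar> \<le> 1) \<and> rnorm z \<le> 1 \<and> coef_pairing f z = dnorm f"

lemma norming_sequence_subseq_tendsto:
  assumes f: "f \<in> Dual" and x: "\<forall>j. x j \<in> c0 \<and> rnorm (x j) \<le> 1"
    and lim: "(\<lambda>j. f (x j)) \<longlonglongrightarrow> dnorm f"
  obtains r z where "strict_mono r" "norming_point f z"
    "\<And>g. g \<in> Dual \<Longrightarrow> (\<lambda>j. g (x (r j))) \<longlonglongrightarrow> coef_pairing g z"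
proof -
  have xb: "\<forall>j k. \<bar>x j k\<bar> \<le> 1"
    using x c0_bounded abs_le_read_norm by (meson order_trans)
  then obtain r z where r: "strict_mono r" and zl: "\<And>k. (\<lambda>j. x (r j) k) \<longlonglongrightarrow> z k"
    using bounded_seqs_coordinatewise_convergent_subseq[of x 1] by blast
  have zb: "\<forall>k. \<bar>z k\<bar> \<le> 1" and zr: "rnorm z \<le> 1"
    using read_norm_lower_semicontinuous[of "x \<circ> r" 1 1 z] xb x zl by auto
  have gl: "(\<lambda>j. g (x (r j))) \<longlonglongrightarrow> coef_pairing g z" if g: "g \<in> Dual" for g
    using coef_pairing_tendsto[OF g, of "x \<circ> r" 1 z] xb zl coef_pairing_eq[OF g] x by simp
  have "(\<lambda>j. f (x (r j))) \<longlonglongrightarrow> dnorm f" using LIMSEQ_subseq_LIMSEQ[OF lim r] by (simp add: o_def)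
  hence "coef_pairing f z = dnorm f" using gl[OF f] LIMSEQ_unique by blast
  thus thesis using that[OF r] gl zb zr by (simp add: norming_point_def)
qed

lemma maximising_sequence_tendsto:
  assumes f: "f \<in> Dual" and x: "\<forall>j. x j \<in> c0 \<and> rnorm (x j) \<le> 1"
    and lower: "\<forall>j. dnorm f - e j < f (x j)" and e: "e \<longlonglongrightarrow> 0"
  shows "(\<lambda>j. f (x j)) \<longlonglongrightarrow> dnorm f"
proof (rule tendsto_sandwich[of "\<lambda>j. dnorm f - e j" _ _ "\<lambda>j. dnorm f"])
  show "\<forall>\<^sub>F j in sequentially. dnorm f - e j \<le> f (x j)" using lower by (simp add: less_imp_le)
  show "\<forall>\<^sub>F j in sequentially. f (x j) \<le> dnorm f"
    using abs_le_dual_norm[OF f] x by (auto simp: abs_le_iff)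
  show "(\<lambda>j. dnorm f - e j) \<longlonglongrightarrow> dnorm f" using tendsto_diff[OF tendsto_const e] by simp
qed simp

lemma exists_norming_point:
  assumes f: "f \<in> Dual" obtains z where "norming_point f z"
proof -
  have "\<forall>j. \<exists>x. x \<in> c0 \<and> rnorm x \<le> 1 \<and> dnorm f - inverse (real (Suc j)) < f x"
    using dual_norm_approx[OF f] by (metis inverse_positive_iff_positive of_nat_0_less_iff zero_less_Suc)
  then obtain x where x: "\<forall>j. x j \<in> c0 \<and> rnorm (x j) \<le> 1 \<and> dnorm f - inverse (real (Suc j)) < f (x j)"
    by metis
  have "(\<lambda>j. f (x j)) \<longlonglongrightarrow> dnorm f"
    using x by (intro maximising_sequence_tendsto[OF f _ _ LIMSEQ_inverse_real_of_nat]) auto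
  thus thesis using norming_sequence_subseq_tendsto[OF f] x that by blast
qed

text \<open>Take n with u_n the separating vector; subtracting the coordinate a_n moves the pairing by at
  most B.\<close>

lemma exists_read_term_opposite_signs:
  assumes p: "\<forall>k. \<bar>p k\<bar> \<le> B" and q: "\<forall>k. \<bar>q k\<bar> \<le> B" and det: "p i * q j \<noteq> p j * q i"
  obtains n where "0 < read_term n p" "read_term n q < 0"
proof -
  obtain v where v: "v \<in> c00Q" "B < pair p v" "pair q v < - B"
    using exists_c00Q_separating[OF p q det] .
  then obtain n where n: "u n = v" using infinite_occurrences not_finite_existsD by blast
  show thesis
  proof
    show "0 < read_term n p"
      using read_term_eq_pair_u[OF n, of p] v spec[OF p, of "a n"] by (simp add: abs_le_iff)
    show "read_term n q < 0"
      using read_term_eq_pair_u[OF n, of q] v spec[OF q, of "a n"] by (simp add: abs_le_iff)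
  qed
qed

lemma read_norm_add_less:
  assumes p: "\<forall>k. \<bar>p k\<bar> \<le> B" and q: "\<forall>k. \<bar>q k\<bar> \<le> B" and det: "p i * q j \<noteq> p j * q i"
  shows "rnorm (\<lambda>k. p k + q k) < rnorm p + rnorm q"
proof -
  define s where "s = (\<lambda>k. p k + q k)"
  have s: "\<forall>k. \<bar>s k\<bar> \<le> B + B" unfolding s_def by (rule abs_add_bounded[OF p q])
  define gap where "gap n = weight n * \<bar>read_term n p\<bar> + weight n * \<bar>read_term n q\<bar> - weight n * \<bar>read_term n s\<bar>" for n
  have gap_nonneg: "0 \<le> gap n" for n
    using weight_pos[of n] abs_triangle_ineq[of "read_term n p" "read_term n q"]
    by (simp add: gap_def s_def read_term_add distrib_left[symmetric])
  obtain n where "0 < read_term n p" "read_term n q < 0" using exists_read_term_opposite_signs[OF p q det] .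
  hence "\<bar>read_term n s\<bar> < \<bar>read_term n p\<bar> + \<bar>read_term n q\<bar>" by (simp add: s_def read_term_add)
  hence "0 < gap n" using weight_pos[of n] by (simp add: gap_def distrib_left[symmetric])
  moreover have summable: "summable gap" unfolding gap_def
    by (intro summable_diff summable_add summable_weighted_read_term[OF p] summable_weighted_read_term[OF q]
        summable_weighted_read_term[OF s])
  ultimately have "0 < suminf gap" using gap_nonneg by (intro suminf_pos2) auto
  moreover have "suminf gap = (\<Sum>n. weight n * \<bar>read_term n p\<bar>) + (\<Sum>n. weight n * \<bar>read_term n q\<bar>)
      - (\<Sum>n. weight n * \<bar>read_term n s\<bar>)"
    unfolding gap_def
    by (simp add: suminf_diff suminf_add summable_add summable_weighted_read_term[OF p]
        summable_weighted_read_term[OF q] summable_weighted_read_term[OF s])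
  moreover have "supnorm s \<le> supnorm p + supnorm q"
    by (rule supnorm_le) (auto simp: s_def intro!: order_trans[OF abs_triangle_ineq] add_mono
        abs_le_supnorm[OF p] abs_le_supnorm[OF q])
  ultimately show ?thesis unfolding read_norm_eq s_def[symmetric] by linarith
qed

lemma norming_point_unique:
  assumes f: "f \<in> Dual" and pos: "0 < dnorm f" and p: "norming_point f p" and q: "norming_point f q"
  shows "p = q"
proof -
  have pb: "\<forall>k. \<bar>p k\<bar> \<le> 1" and qb: "\<forall>k. \<bar>q k\<bar> \<le> 1" using p q by (auto simp: norming_point_def)
  show "p = q"
  proof (cases "\<forall>i j. p i * q j = p j * q i")
    case True
    have "q \<noteq> (\<lambda>k. 0)" using q pos by (auto simp: norming_point_def coef_pairing_def)
    then obtain j where qj: "q j \<noteq> 0" by auto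
    define l where "l = p j / q j"
    have pl: "p = (\<lambda>k. l * q k)"
      using True qj by (auto simp: l_def field_simps)
    have "dnorm f = l * dnorm f"
      using p q coef_pairing_scale[OF f qb, of l] by (simp add: norming_point_def pl)
    thus "p = q" using pos pl by simp
  next
    case False
    then obtain i j where det: "p i * q j \<noteq> p j * q i" by blast
    have sb: "\<forall>k. \<bar>p k + q k\<bar> \<le> 1 + 1" by (rule abs_add_bounded[OF pb qb])
    have "2 * dnorm f = coef_pairing f (\<lambda>k. p k + q k)"
      using coef_pairing_add[OF f pb qb] p q by (simp add: norming_point_def)
    also have "\<dots> \<le> dnorm f * rnorm (\<lambda>k. p k + q k)" using abs_coef_pairing_le[OF f sb] by simp
    also have "\<dots> < dnorm f * 2"
      using read_norm_add_less[OF pb qb det] p q pos by (simp add: norming_point_def)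
    finally show "p = q" by simp
  qed
qed

lemma norming_sequence_subseq_tendsto_norming_point:
  assumes f: "f \<in> Dual" and pos: "0 < dnorm f" and z: "norming_point f z" and g: "g \<in> Dual"
    and x: "\<forall>j. x j \<in> c0 \<and> rnorm (x j) \<le> 1" and lim: "(\<lambda>j. f (x j)) \<longlonglongrightarrow> dnorm f"
  obtains r where "strict_mono r" "(\<lambda>j. g (x (r j))) \<longlonglongrightarrow> coef_pairing g z"
proof -
  obtain r w where "strict_mono r" "norming_point f w" "(\<lambda>j. g (x (r j))) \<longlonglongrightarrow> coef_pairing g w"
    using norming_sequence_subseq_tendsto[OF f x lim] g by metis
  thus thesis using norming_point_unique[OF f pos _ z] that by blast
qed

lemma coef_pairing_le_difference_quotient:
  assumes f: "f \<in> Dual" and g: "g \<in> Dual" and z: "norming_point f z" and t: "0 < t"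
  shows "coef_pairing g z \<le> (dnorm (\<lambda>x. f x + t * g x) - dnorm f) / t"
proof -
  have zb: "\<forall>k. \<bar>z k\<bar> \<le> 1" and zr: "rnorm z \<le> 1" and zf: "coef_pairing f z = dnorm f"
    using z by (auto simp: norming_point_def)
  have h: "(\<lambda>x. f x + t * g x) \<in> Dual" by (rule read_dual_lincomb[OF f g])
  have "dnorm f + t * coef_pairing g z = coef_pairing (\<lambda>x. f x + t * g x) z"
    using coef_pairing_lincomb[OF f g zb] zf by simp
  also have "\<dots> \<le> dnorm (\<lambda>x. f x + t * g x) * rnorm z" using abs_coef_pairing_le[OF h zb] by simp
  also have "\<dots> \<le> dnorm (\<lambda>x. f x + t * g x)" using mult_left_mono[OF zr dual_norm_nonneg[OF h]] by simp
  finally show ?thesis using t by (simp add: field_simps)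
qed

lemma almost_norming_perturbation:
  assumes f: "f \<in> Dual" and g: "g \<in> Dual" and t: "0 < t" and x: "x \<in> c0" "rnorm x \<le> 1"
    and c: "c \<le> (dnorm (\<lambda>x. f x + t * g x) - dnorm f) / t"
    and near: "dnorm (\<lambda>x. f x + t * g x) - t\<^sup>2 < f x + t * g x"
  shows "dnorm f - (t * (dnorm g - c) + t\<^sup>2) < f x" and "c - t < g x"
proof -
  have "t * c \<le> dnorm (\<lambda>x. f x + t * g x) - dnorm f" using c t by (simp add: field_simps)
  hence key: "dnorm f + t * c - t\<^sup>2 < f x + t * g x" using near by linarith
  have "f x \<le> dnorm f" "g x \<le> dnorm g" using abs_le_dual_norm[OF f x] abs_le_dual_norm[OF g x] by auto
  hence "t * g x \<le> t * dnorm g" using t by (simp add: mult_left_mono)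
  thus "dnorm f - (t * (dnorm g - c) + t\<^sup>2) < f x" using key by (simp add: algebra_simps)
  have "t * (c - t) < t * g x" using key \<open>f x \<le> dnorm f\<close> by (simp add: power2_eq_square algebra_simps)
  thus "c - t < g x" using t by simp
qed

text \<open>The upper half of Smulyan's argument: along t_j \<rightarrow> 0 with difference quotients at least c,
  almost norming x_j for f + t_j g almost norm f and keep g(x_j) almost at least c, while a
  subsequence of g(x_j) tends to coef_pairing g z by uniqueness of the norming point.\<close>

lemma le_coef_pairing_if_difference_quotients_ge:
  assumes f: "f \<in> Dual" and pos: "0 < dnorm f" and z: "norming_point f z" and g: "g \<in> Dual"
    and t: "\<forall>j. 0 < t j" and t0: "t \<longlonglongrightarrow> 0"
    and c: "\<forall>j. c \<le> (dnorm (\<lambda>x. f x + t j * g x) - dnorm f) / t j"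
  shows "c \<le> coef_pairing g z"
proof -
  let ?h = "\<lambda>t x. f x + t * g x"
  have ex_x: "\<forall>j. \<exists>x. x \<in> c0 \<and> rnorm x \<le> 1 \<and> dnorm (?h (t j)) - (t j)\<^sup>2 < ?h (t j) x"
  proof
    fix j
    have "0 < (t j)\<^sup>2" using t[rule_format, of j] by simp
    thus "\<exists>x. x \<in> c0 \<and> rnorm x \<le> 1 \<and> dnorm (?h (t j)) - (t j)\<^sup>2 < ?h (t j) x"
      using dual_norm_approx[OF read_dual_lincomb[OF f g]] by blast
  qed
  obtain x where x: "\<forall>j. x j \<in> c0 \<and> rnorm (x j) \<le> 1 \<and> dnorm (?h (t j)) - (t j)\<^sup>2 < ?h (t j) (x j)"
    using choice[OF ex_x] by blast
  have fx: "dnorm f - (t j * (dnorm g - c) + (t j)\<^sup>2) < f (x j)" and gx: "c - t j < g (x j)" for j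
    using x t c by (intro almost_norming_perturbation[OF f g]; simp)+
  have "(\<lambda>j. f (x j)) \<longlonglongrightarrow> dnorm f"
  proof (rule maximising_sequence_tendsto[OF f])
    show "(\<lambda>j. t j * (dnorm g - c) + (t j)\<^sup>2) \<longlonglongrightarrow> 0"
      using t0 by (auto intro!: tendsto_eq_intros)
  qed (use x fx in blast)+
  then obtain r where r: "strict_mono r" and gl: "(\<lambda>j. g (x (r j))) \<longlonglongrightarrow> coef_pairing g z"
    using norming_sequence_subseq_tendsto_norming_point[OF f pos z g] x by metis
  have "(\<lambda>j. c - t (r j)) \<longlonglongrightarrow> c - 0"
    using LIMSEQ_subseq_LIMSEQ[OF t0 r] by (auto intro!: tendsto_eq_intros simp: o_def)
  thus "c \<le> coef_pairing g z"
    using gx by (intro LIMSEQ_le[OF _ gl, of "\<lambda>j. c - t (r j)", simplified]) (auto intro: less_imp_le)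
qed

lemma difference_quotient_eventually_less:
  assumes f: "f \<in> Dual" and pos: "0 < dnorm f" and z: "norming_point f z" and g: "g \<in> Dual"
    and eps: "0 < \<epsilon>"
  shows "\<exists>b>0. \<forall>t. 0 < t \<and> t < b \<longrightarrow> (dnorm (\<lambda>x. f x + t * g x) - dnorm f) / t < coef_pairing g z + \<epsilon>"
proof (rule ccontr)
  let ?c = "coef_pairing g z + \<epsilon>"
  let ?q = "\<lambda>t. (dnorm (\<lambda>x. f x + t * g x) - dnorm f) / t"
  assume contra: "\<not> ?thesis"
  have ex_t: "\<forall>j. \<exists>t. 0 < t \<and> t < inverse (real (Suc j)) \<and> ?c \<le> ?q t"
  proof
    fix j
    have "\<not> (\<forall>t. 0 < t \<and> t < inverse (real (Suc j)) \<longrightarrow> ?q t < ?c)"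
    proof
      assume "\<forall>t. 0 < t \<and> t < inverse (real (Suc j)) \<longrightarrow> ?q t < ?c"
      hence "\<exists>b>0. \<forall>t. 0 < t \<and> t < b \<longrightarrow> ?q t < ?c"
        by (intro exI[of _ "inverse (real (Suc j))"]) simp
      thus False by (rule notE[OF contra])
    qed
    thus "\<exists>t. 0 < t \<and> t < inverse (real (Suc j)) \<and> ?c \<le> ?q t" by (auto simp: not_less)
  qed
  obtain t where t: "\<forall>j. 0 < t j \<and> t j < inverse (real (Suc j)) \<and> ?c \<le> ?q (t j)"
    using choice[OF ex_t] by blast
  have "0 \<le> t j \<and> t j \<le> inverse (real (Suc j))" for j using t less_imp_le by blast
  hence "t \<longlonglongrightarrow> 0"
    by (intro tendsto_sandwich[OF _ _ tendsto_const LIMSEQ_inverse_real_of_nat] always_eventually) auto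
  hence "?c \<le> coef_pairing g z"
    using t by (intro le_coef_pairing_if_difference_quotients_ge[OF f pos z g]) auto
  thus False using eps by simp
qed

lemma dual_norm_right_derivative:
  assumes f: "f \<in> Dual" and pos: "0 < dnorm f" and z: "norming_point f z" and g: "g \<in> Dual"
  shows "((\<lambda>t. (dnorm (\<lambda>x. f x + t * g x) - dnorm f) / t) \<longlongrightarrow> coef_pairing g z) (at_right 0)"
proof (rule order_tendstoI)
  fix c assume "c < coef_pairing g z"
  thus "\<forall>\<^sub>F t in at_right 0. c < (dnorm (\<lambda>x. f x + t * g x) - dnorm f) / t"
    using coef_pairing_le_difference_quotient[OF f g z] unfolding eventually_at_right_field
    by (intro exI[of _ 1]) force
next
  fix c assume "coef_pairing g z < c"
  then obtain b where "0 < b"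
    "\<forall>t. 0 < t \<and> t < b \<longrightarrow> (dnorm (\<lambda>x. f x + t * g x) - dnorm f) / t < coef_pairing g z + (c - coef_pairing g z)"
    using difference_quotient_eventually_less[OF f pos z g, of "c - coef_pairing g z"] by auto
  thus "\<forall>\<^sub>F t in at_right 0. (dnorm (\<lambda>x. f x + t * g x) - dnorm f) / t < c"
    unfolding eventually_at_right_field by auto
qed

text \<open>The left derivative in direction g is minus the right derivative in direction -g.\<close>

lemma dual_norm_directional_derivative:
  assumes f: "f \<in> Dual" and pos: "0 < dnorm f" and z: "norming_point f z" and g: "g \<in> Dual"
  shows "((\<lambda>t. (dnorm (\<lambda>x. f x + t * g x) - dnorm f) / t) \<longlongrightarrow> coef_pairing g z) (at 0)"
proof -
  let ?q = "\<lambda>g t. (dnorm (\<lambda>x. f x + t * g x) - dnorm f) / t"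
  have zb: "\<forall>k. \<bar>z k\<bar> \<le> 1" using z by (simp add: norming_point_def)
  have "(?q (\<lambda>x. (-1) * g x) \<longlongrightarrow> coef_pairing (\<lambda>x. (-1) * g x) z) (at_right 0)"
    by (rule dual_norm_right_derivative[OF f pos z read_dual_scale_functional[OF g]])
  moreover have "?q (\<lambda>x. (-1) * g x) t = - ?q g (- t)" for t by (simp add: divide_simps)
  ultimately have "((\<lambda>t. ?q g (- t)) \<longlongrightarrow> coef_pairing g z) (at_right 0)"
    using tendsto_minus[of _ _ "at_right 0"] coef_pairing_scale_functional[OF g zb, of "-1"] by fastforce
  hence "(?q g \<longlongrightarrow> coef_pairing g z) (at_left 0)"
    by (simp add: filterlim_at_left_to_right[where a = 0])
  thus ?thesis using dual_norm_right_derivative[OF f pos z g] filterlim_at_split by blast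
qed

end

theorem corollary2p5:
  fixes u :: "nat \<Rightarrow> nat \<Rightarrow> real" and a :: "nat \<Rightarrow> nat"
  assumes "read_admissible u a"
  shows "\<forall>f\<in>read_dual u a. f \<noteq> (\<lambda>_. 0) \<longrightarrow> gateaux_diff (read_dual u a) (dual_norm u a) f"
proof (intro ballI impI)
  interpret read_space u a by (rule read_space.intro[OF assms])
  fix f assume f: "f \<in> Dual" and "f \<noteq> (\<lambda>_. 0)"
  hence pos: "0 < dnorm f" by (rule dual_norm_pos)
  obtain z where z: "norming_point f z" using exists_norming_point[OF f] .
  hence zb: "\<forall>k. \<bar>z k\<bar> \<le> 1" and zr: "rnorm z \<le> 1" by (auto simp: norming_point_def)
  have "\<bar>coef_pairing g z\<bar> \<le> 1 * dnorm g" if g: "g \<in> Dual" for g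
    using abs_coef_pairing_le[OF g zb] mult_left_mono[OF zr dual_norm_nonneg[OF g]] by simp
  thus "gateaux_diff Dual dnorm f"
    unfolding gateaux_diff_def
    using dual_norm_directional_derivative[OF f pos z] coef_pairing_lincomb[OF _ _ zb, of _ _ 1]
      coef_pairing_scale_functional[OF _ zb]
    by (intro exI[of _ "\<lambda>g. coef_pairing g z"] conjI exI[of _ 1]) auto
qed

end
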